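(* Let $g$ be a bounded, non-constant completely monotonic function on $(0,\infty)$. Then for all $x,y>0$, $$g(x)<\frac{(y/x)^y}{\Gamma(y)}\int_0^\infty g(t)\,t^{y-1}e^{-ty/x}\,dt.$$ *)

theory Defs
  imports "HOL-Analysis.Analysis"
begin

text \<open>A function g is completely monotonic on (0,infinity) if it is infinitely
  differentiable there and (-1)^n g^(n)(x) >= 0 for all n and all x > 0.
  Higher derivatives are iterated deriv; since (0,infinity) is open,
  they only depend on the values of g on (0,infinity).\<close>
definition completely_monotonic :: "(real \<Rightarrow> real) \<Rightarrow> bool" where
  "completely_monotonic g \<longleftrightarrow>
     (\<forall>n::nat. \<forall>x>0. ((deriv ^^ n) g) differentiable (at x)
                      \<and> (-1) ^ n * (deriv ^^ n) g x \<ge> 0)"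

end

theory Submission
  imports Defs
begin

text \<open>A completely monotonic function g is convex, so it lies above its tangent line at x.
  Integrating against the Gamma density of shape y and rate y/x, whose mean is x, turns the
  tangent line into g x (Jensen's inequality). The gap g minus the tangent is continuous and
  nonnegative; it cannot vanish identically, because a bounded affine function on (0,infinity)
  is constant. Hence its integral against the positive density is strictly positive.\<close>

lemma completely_monotonic_DERIV:
  assumes "completely_monotonic g" "t > 0"
  shows "((deriv ^^ n) g has_real_derivative (deriv ^^ Suc n) g t) (at t)"
  using assms unfolding completely_monotonic_def
  by (simp add: DERIV_deriv_iff_real_differentiable)

lemma completely_monotonic_convex_on:
  assumes "completely_monotonic g"
  shows "convex_on {0<..} g"
proof (rule f''_ge0_imp_convex[where f' = "deriv g" and f'' = "deriv (deriv g)"])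
  fix t :: real
  assume "t \<in> {0<..}"
  then have t: "t > 0" by simp
  show "(g has_real_derivative deriv g t) (at t)"
    using completely_monotonic_DERIV[OF assms t, of 0] by simp
  show "(deriv g has_real_derivative deriv (deriv g) t) (at t)"
    using completely_monotonic_DERIV[OF assms t, of 1] by simp
  have "(-1) ^ 2 * (deriv ^^ 2) g t \<ge> 0"
    using assms t unfolding completely_monotonic_def by blast
  then show "deriv (deriv g) t \<ge> 0"
    by (simp add: numeral_2_eq_2)
qed simp

definition gamma_weight :: "real \<Rightarrow> real \<Rightarrow> real \<Rightarrow> real" where
  "gamma_weight a c t = indicator {0<..} t * t powr (a - 1) * exp (- c * t)"

lemma gamma_weight_nonneg: "gamma_weight a c t \<ge> 0"
  by (simp add: gamma_weight_def indicator_def)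

lemma gamma_weight_pos: "t > 0 \<Longrightarrow> gamma_weight a c t > 0"
  by (simp add: gamma_weight_def)

lemma borel_measurable_gamma_weight [measurable]:
  "gamma_weight a c \<in> borel_measurable borel"
  unfolding gamma_weight_def by measurable

lemma isCont_gamma_weight:
  assumes "t > 0"
  shows "isCont (gamma_weight a c) t"
proof -
  have "eventually (\<lambda>s. s \<in> {0<..}) (nhds t)"
    using assms by (intro eventually_nhds_in_open) auto
  then have "eventually (\<lambda>s. gamma_weight a c s = s powr (a - 1) * exp (- c * s)) (nhds t)"
    by eventually_elim (simp add: gamma_weight_def)
  moreover have "isCont (\<lambda>s. s powr (a - 1) * exp (- c * s)) t"
    using assms by (intro continuous_intros) auto
  ultimately show ?thesis
    by (simp add: isCont_cong)
qed

lemma has_bochner_integral_gamma_weight: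
  assumes a: "a > 0" and c: "c > 0"
  shows "has_bochner_integral lborel (gamma_weight a c) (Gamma a / c powr a)"
proof -
  define F where "F t = indicator {0..} t * t powr (a - 1) / exp t" for t :: real
  have "F \<in> borel_measurable lborel"
    unfolding F_def by measurable
  then have "has_bochner_integral lborel F (Gamma a)"
    using Gamma_conv_nn_integral_real[OF a] Gamma_real_pos[OF a]
    by (intro has_bochner_integral_nn_integral) (auto simp: F_def indicator_def)
  then have "has_bochner_integral lborel (\<lambda>t. F (0 + c * t)) (Gamma a /\<^sub>R \<bar>c\<bar>)"
    using lborel_has_bochner_integral_real_affine_iff[of c F "Gamma a" 0] c by simp
  then have "has_bochner_integral lborel (\<lambda>t. F (0 + c * t) / c powr (a - 1))
      ((Gamma a /\<^sub>R \<bar>c\<bar>) / c powr (a - 1))"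
    by (rule has_bochner_integral_divide_zero)
  moreover have "F (0 + c * t) / c powr (a - 1) = gamma_weight a c t" for t
    using c by (auto simp: F_def gamma_weight_def indicator_def powr_mult exp_minus
        field_simps zero_le_mult_iff)
  moreover have "(Gamma a /\<^sub>R \<bar>c\<bar>) / c powr (a - 1) = Gamma a / c powr a"
    using c by (simp add: powr_diff field_simps)
  ultimately show ?thesis
    by simp
qed

lemma has_bochner_integral_gamma_weight_moment:
  assumes a: "a > 0" and c: "c > 0"
  shows "has_bochner_integral lborel (\<lambda>t. t * gamma_weight a c t) (a / c * (Gamma a / c powr a))"
proof -
  have "t * gamma_weight a c t = gamma_weight (a + 1) c t" for t
    by (cases "t > 0") (auto simp: gamma_weight_def powr_mult_base)
  moreover have "Gamma (a + 1) = a * Gamma a"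
    using a by (intro Gamma_plus1) (auto elim!: nonpos_Ints_cases)
  then have "Gamma (a + 1) / c powr (a + 1) = a / c * (Gamma a / c powr a)"
    using c by (simp add: powr_add)
  ultimately show ?thesis
    using has_bochner_integral_gamma_weight[of "a + 1" c] a c by simp
qed

lemma integrable_bounded_times_gamma_weight:
  fixes g :: "real \<Rightarrow> real"
  assumes cont: "continuous_on {0<..} g" and bounded: "bounded (g ` {0<..})"
    and "a > 0" "c > 0"
  shows "integrable lborel (\<lambda>t. g t * gamma_weight a c t)"
proof -
  obtain B where B: "\<And>t. t > 0 \<Longrightarrow> \<bar>g t\<bar> \<le> B"
    using bounded unfolding bounded_pos by force
  have "(\<lambda>t. indicator {0<..} t *\<^sub>R g t) \<in> borel_measurable borel"
    by (rule borel_measurable_continuous_on_indicator[OF _ cont]) simp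
  then have "(\<lambda>t. (indicator {0<..} t *\<^sub>R g t) * gamma_weight a c t) \<in> borel_measurable borel"
    by measurable
  moreover have "(\<lambda>t. (indicator {0<..} t *\<^sub>R g t) * gamma_weight a c t)
      = (\<lambda>t. g t * gamma_weight a c t)"
    by (auto simp: fun_eq_iff gamma_weight_def indicator_def)
  ultimately have measurable: "(\<lambda>t. g t * gamma_weight a c t) \<in> borel_measurable lborel"
    by simp
  have majorant: "integrable lborel (\<lambda>t. B * gamma_weight a c t)"
    using has_bochner_integral_gamma_weight[OF \<open>a > 0\<close> \<open>c > 0\<close>]
    by (auto simp: has_bochner_integral_iff)
  have bound: "norm (g t * gamma_weight a c t) \<le> norm (B * gamma_weight a c t)" for t
    using B[of t] gamma_weight_nonneg[of a c t]
    by (cases "t > 0") (auto simp: abs_mult gamma_weight_def intro: mult_right_mono)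
  show ?thesis
    by (rule Bochner_Integration.integrable_bound[OF majorant measurable]) (intro AE_I2 bound)
qed

lemma integral_pos_if_isCont_pos:
  fixes f :: "real \<Rightarrow> real"
  assumes int: "integrable lborel f" and nonneg: "\<And>t. f t \<ge> 0"
    and cont: "isCont f t0" and pos: "f t0 > 0"
  shows "integral\<^sup>L lborel f > 0"
proof -
  obtain d where d: "d > 0" and near: "\<And>t. dist t t0 < d \<Longrightarrow> dist (f t) (f t0) < f t0 / 2"
    using cont pos unfolding continuous_at_eps_delta by (metis half_gt_zero)
  have below: "f t0 / 2 * indicator {t0 - d / 2..t0 + d / 2} t \<le> f t" for t
  proof (cases "t \<in> {t0 - d / 2..t0 + d / 2}")
    case True
    then have "dist t t0 < d"
      using d by (auto simp: dist_real_def)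
    then have "f t > f t0 / 2"
      using near unfolding dist_real_def abs_less_iff by fastforce
    then show ?thesis
      using True by simp
  qed (simp add: nonneg)
  have "0 < f t0 / 2 * d"
    using d pos by simp
  also have "\<dots> = integral\<^sup>L lborel (\<lambda>t. f t0 / 2 * indicator {t0 - d / 2..t0 + d / 2} t)"
    using d by simp
  also have "\<dots> \<le> integral\<^sup>L lborel f"
    using d by (intro integral_mono[OF _ int below] integrable_mult_right)
      (simp add: integrable_indicator_iff emeasure_lborel_Icc_eq)
  finally show ?thesis .
qed

lemma slope_eq_0_if_affine_bounded_on_pos:
  fixes a b B :: real
  assumes "\<And>t. t > 0 \<Longrightarrow> \<bar>a + b * t\<bar> \<le> B"
  shows "b = 0"
proof (rule ccontr)
  assume "b \<noteq> 0"
  define t where "t = (\<bar>B\<bar> + \<bar>a\<bar> + 1) / \<bar>b\<bar>"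
  have "t > 0" and "\<bar>b * t\<bar> = \<bar>B\<bar> + \<bar>a\<bar> + 1"
    using \<open>b \<noteq> 0\<close> by (auto simp: t_def abs_mult add_pos_nonneg)
  with assms[of t] show False
    by linarith
qed

lemma bounded_nonconst_on_pos_not_affine:
  fixes g :: "real \<Rightarrow> real"
  assumes bounded: "bounded (g ` {0<..})" and nonconst: "\<exists>s>0. \<exists>t>0. g s \<noteq> g t"
  shows "\<exists>t>0. g t \<noteq> g x + m * (t - x)"
proof (rule ccontr)
  assume "\<not> (\<exists>t>0. g t \<noteq> g x + m * (t - x))"
  then have affine: "g t = (g x - m * x) + m * t" if "t > 0" for t
    using that by (force simp: algebra_simps)
  obtain B where "\<And>t. t > 0 \<Longrightarrow> \<bar>g t\<bar> \<le> B"
    using bounded unfolding bounded_pos by force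
  then have "m = 0"
    using affine by (intro slope_eq_0_if_affine_bounded_on_pos[of "g x - m * x" m B]) simp
  then have const: "g t = g x" if "t > 0" for t
    using affine[OF that] by simp
  obtain s t where "s > 0" "t > 0" "g s \<noteq> g t"
    using nonconst by blast
  then show False
    using const by simp
qed

lemma convex_lt_gamma_weighted_integral:
  fixes g :: "real \<Rightarrow> real"
  assumes convex: "convex_on {0<..} g" and bounded: "bounded (g ` {0<..})"
    and nonconst: "\<exists>s>0. \<exists>t>0. g s \<noteq> g t"
    and deriv: "(g has_real_derivative g') (at x)" and x: "x > 0" and a: "a > 0"
  shows "g x * (Gamma a / (a / x) powr a) < (\<integral>t. g t * gamma_weight a (a / x) t \<partial>lborel)"
proof -
  define c where "c = a / x"
  define K where "K = Gamma a / c powr a"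
  define I where "I = (\<integral>t. g t * gamma_weight a c t \<partial>lborel)"
  define h where "h t = g t - g x - g' * (t - x)" for t
  have c: "c > 0"
    using a x by (simp add: c_def)
  have cont: "continuous_on {0<..} g"
    using convex_on_continuous[OF open_greaterThan convex] .
  have h_nonneg: "h t \<ge> 0" if "t > 0" for t
    using convex_on_imp_above_tangent[OF convex, of x t g'] deriv x that
    by (auto simp: h_def interior_open has_field_derivative_at_within)
  obtain t0 where "t0 > 0" "g t0 \<noteq> g x + g' * (t0 - x)"
    using bounded_nonconst_on_pos_not_affine[OF bounded nonconst] by blast
  with h_nonneg have t0: "t0 > 0" "h t0 > 0"
    by (force simp: h_def)+
  have "has_bochner_integral lborel
      (\<lambda>t. g t * gamma_weight a c t - g x * gamma_weight a c t
           - g' * (t * gamma_weight a c t - x * gamma_weight a c t))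
      (I - g x * K - g' * (a / c * K - x * K))"
    unfolding I_def K_def
    using integrable_bounded_times_gamma_weight[OF cont bounded a c]
      has_bochner_integral_gamma_weight[OF a c] has_bochner_integral_gamma_weight_moment[OF a c]
    by (intro has_bochner_integral_diff has_bochner_integral_mult_right
        has_bochner_integral_integrable)
  moreover have "a / c = x"
    using a x by (simp add: c_def)
  ultimately have gap: "has_bochner_integral lborel (\<lambda>t. h t * gamma_weight a c t) (I - g x * K)"
    by (simp add: h_def algebra_simps)
  have "isCont h t0"
    unfolding h_def using cont t0(1)
    by (intro continuous_intros) (auto simp: continuous_on_eq_continuous_at)
  moreover have "h t * gamma_weight a c t \<ge> 0" for t
    using h_nonneg[of t] gamma_weight_nonneg[of a c t]
    by (cases "t > 0") (auto simp: gamma_weight_def)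
  ultimately have "integral\<^sup>L lborel (\<lambda>t. h t * gamma_weight a c t) > 0"
    using gap t0 gamma_weight_pos[of t0 a c]
    by (intro integral_pos_if_isCont_pos continuous_intros isCont_gamma_weight)
      (auto simp: has_bochner_integral_iff)
  with gap show ?thesis
    by (simp add: has_bochner_integral_iff I_def K_def c_def)
qed

theorem corollary2p6:
  fixes g :: "real \<Rightarrow> real" and x y :: real
  assumes "completely_monotonic g"
    and "bounded (g ` {0<..})"
    and "\<exists>a>0. \<exists>b>0. g a \<noteq> g b"
    and "x > 0" and "y > 0"
  shows "g x < (y / x) powr y / Gamma y *
           (LBINT t:{0<..}. g t * t powr (y - 1) * exp (- t * y / x))"
proof -
  have "(g has_real_derivative deriv g x) (at x)"
    using completely_monotonic_DERIV[OF assms(1,4), of 0] by simp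
  then have "g x * (Gamma y / (y / x) powr y) < (\<integral>t. g t * gamma_weight y (y / x) t \<partial>lborel)"
    using completely_monotonic_convex_on[OF assms(1)] assms(2-5)
    by (intro convex_lt_gamma_weighted_integral)
  moreover have "(LBINT t:{0<..}. g t * t powr (y - 1) * exp (- t * y / x))
      = (\<integral>t. g t * gamma_weight y (y / x) t \<partial>lborel)"
    unfolding set_lebesgue_integral_def gamma_weight_def
    by (intro Bochner_Integration.integral_cong) (auto simp: indicator_def)
  moreover have "Gamma y > 0" "(y / x) powr y > 0"
    using assms(4,5) by simp_all
  ultimately show ?thesis
    by (simp add: field_simps)
qed

end
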